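(* Let $R$ be a finite set of nonnegative integers and let $\mathcal{H}$ be a family of hypergraphs each having set of edge types $R$. For each $n$, let $\pi_n(\mathcal{H})$ be the maximum of the Lubell function $h_n(G)$ over all hypergraphs $G$ on $n$ vertices with $R(G)\subseteq R$ which contain no member of $\mathcal{H}$ as a subgraph. Then the limit $\lim_{n\to\infty}\pi_n(\mathcal{H})$ exists.
   Context: A hypergraph $H=(V,E)$ has a finite vertex set $V$ and edge set $E\subseteq 2^V$ (edges may have different sizes). $R(H)=\{|F|: F\in E\}$ is its set of edge types. A hypergraph $H_1$ is a subgraph of $H_2$ if there is an injective map $f\colon V(H_1)\to V(H_2)$ with $f(F)\in E(H_2)$ for every $F\in E(H_1)$. For a hypergraph $G$ on $n$ vertices, the Lubell function is $h_n(G)=\sum_{F\in E(G)} 1/\binom{n}{|F|}$. *)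

theory Defs
  imports Complex_Main
begin

definition hypergraph :: "'a set \<times> 'a set set \<Rightarrow> bool" where
  "hypergraph H \<longleftrightarrow> finite (fst H) \<and> snd H \<subseteq> Pow (fst H)"

definition edge_types :: "'a set \<times> 'a set set \<Rightarrow> nat set" where
  "edge_types H = card ` snd H"

definition subgraph_of :: "'a set \<times> 'a set set \<Rightarrow> 'b set \<times> 'b set set \<Rightarrow> bool" where
  "subgraph_of H1 H2 \<longleftrightarrow>
     (\<exists>f. inj_on f (fst H1) \<and> f ` fst H1 \<subseteq> fst H2 \<and> (\<forall>F\<in>snd H1. f ` F \<in> snd H2))"

definition lubell :: "nat \<Rightarrow> 'a set \<times> 'a set set \<Rightarrow> real" where
  "lubell n G = (\<Sum>F\<in>snd G. 1 / real (n choose card F))"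

definition lubell_pi :: "nat set \<Rightarrow> ('a set \<times> 'a set set) set \<Rightarrow> nat \<Rightarrow> real" where
  "lubell_pi R \<H> n = Max {lubell n G | G :: nat set \<times> nat set set.
      hypergraph G \<and> fst G = {0..<n} \<and> edge_types G \<subseteq> R \<and>
      (\<forall>H\<in>\<H>. \<not> subgraph_of H G)}"

end

theory Submission
  imports Defs "HOL-Combinatorics.Transposition"
begin

text \<open>Delete a vertex from a hypergraph G on n+1 vertices whose edges have at most n elements.
  Averaged over the deleted vertex, each edge F survives n+1-|F| times, and
  (n+1-|F|) / C(n,|F|) = (n+1) / C(n+1,|F|); hence some deletion G-v satisfies
  h_n(G-v) \<ge> h_{n+1}(G). Since deletion keeps the hypergraph \<H>-free, \<pi>_{n+1} \<le> \<pi>_n as soon as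
  n \<ge> max R, and a nonincreasing nonnegative sequence converges. If no admissible hypergraph
  exists for some such n, none exists for any larger n, and the sequence is eventually the
  constant Max {}.\<close>

lemma subgraph_of_trans:
  assumes "subgraph_of H1 H2" and "subgraph_of H2 H3"
  shows "subgraph_of H1 H3"
proof -
  obtain f where f: "inj_on f (fst H1)" "f ` fst H1 \<subseteq> fst H2" "\<forall>F\<in>snd H1. f ` F \<in> snd H2"
    using assms(1) unfolding subgraph_of_def by blast
  obtain g where g: "inj_on g (fst H2)" "g ` fst H2 \<subseteq> fst H3" "\<forall>F\<in>snd H2. g ` F \<in> snd H3"
    using assms(2) unfolding subgraph_of_def by blast
  have "inj_on (g \<circ> f) (fst H1)"
    using f(1,2) g(1) by (simp add: comp_inj_on inj_on_subset)
  moreover have "(g \<circ> f) ` fst H1 \<subseteq> fst H3"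
    using f(2) g(2) by (auto simp: image_comp[symmetric])
  moreover have "\<forall>F\<in>snd H1. (g \<circ> f) ` F \<in> snd H3"
    using f(3) g(3) by (metis image_comp)
  ultimately show ?thesis unfolding subgraph_of_def by blast
qed

lemma subgraph_of_subsets:
  assumes "fst H \<subseteq> fst G" and "snd H \<subseteq> snd G"
  shows "subgraph_of H G"
  unfolding subgraph_of_def using assms by (intro exI[of _ id]) auto

definition delete_vertex :: "'a set \<times> 'a set set \<Rightarrow> 'a \<Rightarrow> 'a set \<times> 'a set set" where
  "delete_vertex G v = (fst G - {v}, {F \<in> snd G. v \<notin> F})"

definition hypergraph_image :: "('a \<Rightarrow> 'b) \<Rightarrow> 'a set \<times> 'a set set \<Rightarrow> 'b set \<times> 'b set set" where
  "hypergraph_image f G = (f ` fst G, (`) f ` snd G)"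

lemma hypergraph_delete_vertex: "hypergraph G \<Longrightarrow> hypergraph (delete_vertex G v)"
  unfolding hypergraph_def delete_vertex_def by auto

lemma edge_types_delete_vertex: "edge_types (delete_vertex G v) \<subseteq> edge_types G"
  unfolding edge_types_def delete_vertex_def by auto

lemma subgraph_of_delete_vertex: "subgraph_of (delete_vertex G v) G"
  unfolding delete_vertex_def by (rule subgraph_of_subsets) auto

lemma hypergraph_image: "hypergraph G \<Longrightarrow> hypergraph (hypergraph_image f G)"
  unfolding hypergraph_def hypergraph_image_def by auto

lemma edge_types_image:
  assumes "hypergraph G" and "inj_on f (fst G)"
  shows "edge_types (hypergraph_image f G) = edge_types G"
proof -
  have "card (f ` F) = card F" if "F \<in> snd G" for F
    using that assms by (intro card_image) (auto simp: hypergraph_def intro: inj_on_subset)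
  then show ?thesis
    unfolding edge_types_def hypergraph_image_def by (force simp: image_image)
qed

lemma lubell_image:
  assumes "hypergraph G" and "inj_on f (fst G)"
  shows "lubell n (hypergraph_image f G) = lubell n G"
proof -
  have inj_F: "inj_on f F" if "F \<in> snd G" for F
    using that assms by (auto simp: hypergraph_def intro: inj_on_subset)
  have "inj_on ((`) f) (snd G)"
  proof (rule inj_onI)
    fix F F' assume "F \<in> snd G" "F' \<in> snd G" "f ` F = f ` F'"
    moreover have "F \<subseteq> fst G" "F' \<subseteq> fst G"
      using \<open>F \<in> snd G\<close> \<open>F' \<in> snd G\<close> assms(1) by (auto simp: hypergraph_def)
    ultimately show "F = F'" using inj_on_image_eq_iff[OF assms(2)] by blast
  qed
  then show ?thesis
    unfolding lubell_def hypergraph_image_def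
    by (simp add: sum.reindex card_image[OF inj_F])
qed

lemma subgraph_of_image:
  assumes "hypergraph G" and "inj_on f (fst G)"
  shows "subgraph_of (hypergraph_image f G) G"
  unfolding subgraph_of_def hypergraph_image_def
proof (intro exI[of _ "inv_into (fst G) f"] conjI ballI)
  show "inj_on (inv_into (fst G) f) (fst (f ` fst G, (`) f ` snd G))"
    by (simp add: inj_on_inv_into)
  show "inv_into (fst G) f ` fst (f ` fst G, (`) f ` snd G) \<subseteq> fst G"
    using assms(2) by auto
  fix F assume "F \<in> snd (f ` fst G, (`) f ` snd G)"
  then obtain F0 where "F0 \<in> snd G" "F = f ` F0" by auto
  moreover have "F0 \<subseteq> fst G" using \<open>F0 \<in> snd G\<close> assms(1) by (auto simp: hypergraph_def)
  ultimately show "inv_into (fst G) f ` F \<in> snd G" using assms(2) by simp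
qed

lemma Suc_diff_div_binomial:
  assumes "k \<le> n"
  shows "real (Suc n - k) / real (n choose k) = real (Suc n) / real (Suc n choose k)"
proof -
  have "real (Suc n - k) * real (Suc n choose k) = real (Suc n) * real (n choose k)"
    using binomial_absorb_comp[of "Suc n" k] by (metis diff_Suc_1 of_nat_mult)
  moreover have "n choose k > 0" "Suc n choose k > 0" using assms by simp_all
  ultimately show ?thesis by (simp add: field_simps)
qed

lemma sum_lubell_delete_vertex:
  assumes G: "hypergraph G" and card_V: "card (fst G) = Suc n"
    and small_edges: "\<forall>F\<in>snd G. card F \<le> n"
  shows "(\<Sum>v\<in>fst G. lubell n (delete_vertex G v)) = real (Suc n) * lubell (Suc n) G"
proof -
  have fin: "finite (fst G)" "finite (snd G)"
    using G by (auto simp: hypergraph_def intro: finite_subset)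
  have "(\<Sum>v\<in>fst G. lubell n (delete_vertex G v))
      = (\<Sum>v\<in>fst G. \<Sum>F\<in>snd G. if v \<notin> F then 1 / real (n choose card F) else 0)"
    unfolding lubell_def delete_vertex_def using fin by (simp add: sum.inter_filter)
  also have "\<dots> = (\<Sum>F\<in>snd G. \<Sum>v\<in>fst G. if v \<notin> F then 1 / real (n choose card F) else 0)"
    by (rule sum.swap)
  also have "\<dots> = (\<Sum>F\<in>snd G. real (Suc n) / real (Suc n choose card F))"
  proof (rule sum.cong[OF refl])
    fix F assume F: "F \<in> snd G"
    then have "F \<subseteq> fst G" using G by (auto simp: hypergraph_def)
    then have "card (fst G - F) = Suc n - card F"
      using fin card_V by (simp add: card_Diff_subset finite_subset)
    then have "(\<Sum>v\<in>fst G. if v \<notin> F then 1 / real (n choose card F) else 0)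
        = real (Suc n - card F) / real (n choose card F)"
      using fin by (simp add: sum.If_cases Diff_eq Compl_eq)
    also have "\<dots> = real (Suc n) / real (Suc n choose card F)"
      using F small_edges by (simp add: Suc_diff_div_binomial)
    finally show "(\<Sum>v\<in>fst G. if v \<notin> F then 1 / real (n choose card F) else 0)
        = real (Suc n) / real (Suc n choose card F)" .
  qed
  also have "\<dots> = real (Suc n) * lubell (Suc n) G"
    unfolding lubell_def by (simp add: sum_distrib_left)
  finally show ?thesis .
qed

lemma ex_delete_vertex_lubell_ge:
  assumes "hypergraph G" and "card (fst G) = Suc n" and "\<forall>F\<in>snd G. card F \<le> n"
  obtains v where "v \<in> fst G" and "lubell (Suc n) G \<le> lubell n (delete_vertex G v)"
proof (rule ccontr)
  assume "\<not> thesis"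
  with that have less: "lubell n (delete_vertex G v) < lubell (Suc n) G" if "v \<in> fst G" for v
    using that by fastforce
  have "finite (fst G)" "fst G \<noteq> {}" using assms(2) card.infinite by fastforce+
  then have "(\<Sum>v\<in>fst G. lubell n (delete_vertex G v)) < (\<Sum>v\<in>fst G. lubell (Suc n) G)"
    using less by (rule sum_strict_mono)
  then show False using sum_lubell_delete_vertex[OF assms] assms(2) by simp
qed

definition lubell_values :: "nat set \<Rightarrow> ('a set \<times> 'a set set) set \<Rightarrow> nat \<Rightarrow> real set" where
  "lubell_values R \<H> n = {lubell n G | G :: nat set \<times> nat set set.
      hypergraph G \<and> fst G = {0..<n} \<and> edge_types G \<subseteq> R \<and> (\<forall>H\<in>\<H>. \<not> subgraph_of H G)}"

lemma lubell_pi_eq_Max: "lubell_pi R \<H> n = Max (lubell_values R \<H> n)"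
  unfolding lubell_pi_def lubell_values_def ..

lemma finite_lubell_values: "finite (lubell_values R \<H> n)"
proof -
  have "{G :: nat set \<times> nat set set. hypergraph G \<and> fst G = {0..<n}}
      \<subseteq> {{0..<n}} \<times> Pow (Pow {0..<n})"
    by (auto simp: hypergraph_def mem_Times_iff) (meson PowD atLeastLessThan_iff subsetD)
  then have "finite {G :: nat set \<times> nat set set. hypergraph G \<and> fst G = {0..<n}}"
    by (rule finite_subset) auto
  then have "finite (lubell n ` {G :: nat set \<times> nat set set. hypergraph G \<and> fst G = {0..<n}})"
    by simp
  then show ?thesis
    unfolding lubell_values_def by (rule finite_subset[rotated]) auto
qed

lemma lubell_values_nonneg: "x \<in> lubell_values R \<H> n \<Longrightarrow> 0 \<le> x"
  unfolding lubell_values_def lubell_def by (auto intro: sum_nonneg)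

lemma lubell_values_Suc_dominated:
  assumes R_le: "\<forall>k\<in>R. k \<le> n" and x: "x \<in> lubell_values R \<H> (Suc n)"
  shows "\<exists>y\<in>lubell_values R \<H> n. x \<le> y"
proof -
  obtain G :: "nat set \<times> nat set set" where G: "hypergraph G" "fst G = {0..<Suc n}"
    "edge_types G \<subseteq> R" "\<forall>H\<in>\<H>. \<not> subgraph_of H G" and x_eq: "x = lubell (Suc n) G"
    using x unfolding lubell_values_def by blast
  have "\<forall>F\<in>snd G. card F \<le> n"
    using G(3) R_le unfolding edge_types_def by auto
  then obtain v where v: "v \<in> fst G" and "x \<le> lubell n (delete_vertex G v)"
    using ex_delete_vertex_lubell_ge[OF G(1)] G(2) x_eq by auto
  define D where "D = delete_vertex G v"
  define G' where "G' = hypergraph_image (Transposition.transpose v n) D"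
  have D: "hypergraph D" "edge_types D \<subseteq> R" "subgraph_of D G"
    unfolding D_def
    using hypergraph_delete_vertex[OF G(1)] edge_types_delete_vertex[of G v] G(3)
      subgraph_of_delete_vertex[of G v] by auto
  have inj: "inj_on (Transposition.transpose v n) (fst D)" by simp
  have "fst G' = {0..<n}"
    using v G(2) unfolding G'_def D_def hypergraph_image_def delete_vertex_def
    by (auto simp: in_transpose_image_iff transpose_def)
  moreover have "hypergraph G'"
    unfolding G'_def using D(1) by (rule hypergraph_image)
  moreover have "edge_types G' \<subseteq> R"
    unfolding G'_def edge_types_image[OF D(1) inj] by (rule D(2))
  moreover have "x \<le> lubell n G'"
    unfolding G'_def lubell_image[OF D(1) inj] using \<open>x \<le> _\<close> by (simp add: D_def)
  moreover have "\<not> subgraph_of H G'" if "H \<in> \<H>" for H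
    using subgraph_of_trans[OF subgraph_of_trans[OF _ subgraph_of_image[OF D(1) inj]] D(3)]
      G(4) that unfolding G'_def by metis
  ultimately show ?thesis unfolding lubell_values_def by blast
qed

lemma convergent_Max_dominated:
  fixes S :: "nat \<Rightarrow> real set"
  assumes fin: "\<And>n. finite (S n)" and nonneg: "\<And>n x. x \<in> S n \<Longrightarrow> 0 \<le> x"
    and dominated: "\<And>n x. N \<le> n \<Longrightarrow> x \<in> S (Suc n) \<Longrightarrow> \<exists>y\<in>S n. x \<le> y"
  shows "convergent (\<lambda>n. Max (S n))"
proof (cases "\<forall>n\<ge>N. S n \<noteq> {}")
  case True
  have "Max (S (Suc n)) \<le> Max (S n)" if n: "N \<le> n" for n
  proof -
    have "S (Suc n) \<noteq> {}" using True n by simp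
    then have "Max (S (Suc n)) \<in> S (Suc n)" using fin by simp
    then obtain y where "y \<in> S n" "Max (S (Suc n)) \<le> y"
      using dominated[OF n] by blast
    then show ?thesis using fin by (meson Max_ge order_trans)
  qed
  then have "decseq (\<lambda>k. Max (S (k + N)))"
    unfolding decseq_Suc_iff by (metis add_Suc le_add2)
  moreover have "0 \<le> Max (S (k + N))" for k
    using True nonneg[OF Max_in[OF fin]] by simp
  ultimately have "convergent (\<lambda>k. Max (S (k + N)))"
    using decseq_convergent unfolding convergent_def by blast
  then show ?thesis using convergent_ignore_initial_segment[of "\<lambda>n. Max (S n)" N] by simp
next
  case False
  then obtain n0 where n0: "N \<le> n0" "S n0 = {}" by auto
  have "S (k + n0) = {}" for k
  proof (induction k)
    case (Suc k)
    then show ?case using dominated[of "k + n0"] n0(1) by fastforce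
  qed (use n0 in simp)
  then have "convergent (\<lambda>k. Max (S (k + n0)))" by (simp add: convergent_const)
  then show ?thesis using convergent_ignore_initial_segment[of "\<lambda>n. Max (S n)" n0] by simp
qed

theorem mainTheorem1:
  fixes R :: "nat set" and \<H> :: "('a set \<times> 'a set set) set"
  assumes "finite R"
    and "\<forall>H\<in>\<H>. hypergraph H \<and> edge_types H = R"
  shows "convergent (\<lambda>n. lubell_pi R \<H> n)"
proof -
  obtain N where "\<forall>k\<in>R. k \<le> N"
    using assms(1) finite_nat_set_iff_bounded_le by blast
  then have dominated: "\<exists>y\<in>lubell_values R \<H> n. x \<le> y"
    if "N \<le> n" and "x \<in> lubell_values R \<H> (Suc n)" for n x
    using that lubell_values_Suc_dominated by (meson order_trans)
  then show ?thesis
    unfolding lubell_pi_eq_Max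
    by (intro convergent_Max_dominated[where N = N] finite_lubell_values lubell_values_nonneg dominated)
qed

end
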